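(* Let $n,d,k,V$ be positive integers, where $n$ is the maximum sentence length, videos live in $\mathbb{R}^d$, and $V$ is the vocabulary size. Let $\mathcal{U}=\{u_1,\dots,u_V\}$ with each word embedding $u_i\in\mathbb{R}^k$, and let $\delta_{\min}=\min_{i,j\in[V],\,i\neq j}\|u_i-u_j\|_2$. Let $f:\mathbb{R}^{nk}\to\mathbb{R}^d$ be any map (the text-to-video generation model), viewed as a map from the discrete sentence space $\{u_1,\dots,u_V\}^n\subset\mathbb{R}^{nk}$ to $\mathbb{R}^d$. Let $M:=\max_x\|f(x)\|_2$ and $m:=\min_x\|f(x)\|_2$, where $x$ ranges over $\{u_1,\dots,u_V\}^n$, and let $\epsilon=\big((M^d-m^d)/V^n\big)^{1/d}$. Then there exists $y\in\mathbb{R}^d$ with $m\le\|y\|_2\le M$ such that for every sentence $x\in\{u_1,\dots,u_V\}^n$, $\|f(x)-y\|_2\ge\epsilon$.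
   Context: A sentence $x\in\{u_1,\dots,u_V\}^n$ is identified with the concatenation of its $n$ word embeddings, a vector in $\mathbb{R}^{nk}$. $[V]=\{1,\dots,V\}$. *)

theory Defs
  imports "HOL-Analysis.Analysis"
begin

text \<open>A sentence is a choice of word indices w : 'n \<Rightarrow> nat with values in [V];
  it is identified with the concatenation of its word embeddings, a vector in
  R^(n*k), here indexed by the finite type 'n \<times> 'k (position, coordinate).\<close>

definition concat_sentence :: "(nat \<Rightarrow> real^'k) \<Rightarrow> ('n::finite \<Rightarrow> nat) \<Rightarrow> real^('n \<times> 'k)" where
  "concat_sentence u w = (\<chi> p. u (w (fst p)) $ snd p)"

definition sentences :: "nat \<Rightarrow> (nat \<Rightarrow> real^'k) \<Rightarrow> (real^('n::finite \<times> 'k)) set" where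
  "sentences V u = {concat_sentence u w | w. \<forall>i. w i \<in> {1..V}}"

definition delta_min :: "nat \<Rightarrow> (nat \<Rightarrow> real^'k) \<Rightarrow> real" where
  "delta_min V u = Min {norm (u i - u j) | i j. i \<in> {1..V} \<and> j \<in> {1..V} \<and> i \<noteq> j}"

end

theory Submission
  imports Defs
begin

text \<open>The images of the at most \<open>V ^ n\<close> sentences are finitely many points in the annulus
  \<open>m \<le> \<parallel>y\<parallel> \<le> M\<close> of \<open>\<real>\<^sup>d\<close>. Let \<open>y\<close> be a point of the annulus maximising the distance \<open>r\<close> to these
  points; then the balls of radius \<open>r\<close> around them cover the annulus, so comparing volumes gives
  \<open>c (M\<^sup>d - m\<^sup>d) \<le> V\<^sup>n c r\<^sup>d\<close>, where \<open>c\<close> is the volume of the unit ball, i.e. \<open>r \<ge> \<epsilon>\<close>.\<close>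

lemma measure_annulus:
  fixes c :: "'a::euclidean_space"
  assumes "0 \<le> r" "r \<le> R"
  shows "measure lborel (cball c R - ball c r) =
           unit_ball_vol DIM('a) * (R ^ DIM('a) - r ^ DIM('a))"
proof -
  have "measure lborel (cball c R - ball c r) = measure lborel (cball c R) - measure lborel (ball c r)"
    using assms by (intro measure_Diff) (auto simp: emeasure_cball)
  also have "\<dots> = unit_ball_vol DIM('a) * (R ^ DIM('a) - r ^ DIM('a))"
    using assms content_cball[of R c] content_ball[of r c] by (simp add: algebra_simps)
  finally show ?thesis .
qed

lemma measure_le_card_mult_ball_vol:
  fixes A :: "'a::euclidean_space set"
  assumes "finite T" "A \<in> sets lborel" "A \<subseteq> (\<Union>t\<in>T. cball t r)" "0 \<le> r"
  shows "measure lborel A \<le> real (card T) * (unit_ball_vol DIM('a) * r ^ DIM('a))"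
proof -
  have "(\<Union>t\<in>T. cball t r) \<in> fmeasurable lborel"
    using assms(1) by (intro fmeasurable_compact compact_UN) auto
  then have "measure lborel A \<le> measure lborel (\<Union>t\<in>T. cball t r)"
    using assms(2,3) by (intro measure_mono_fmeasurable)
  also have "\<dots> \<le> (\<Sum>t\<in>T. measure lborel (cball t r))"
    using assms(1) by (intro measure_UNION_le) auto
  also have "\<dots> = real (card T) * (unit_ball_vol DIM('a) * r ^ DIM('a))"
    using assms(4) by (simp add: content_cball)
  finally show ?thesis .
qed

lemma compact_covered_by_balls_of_max_infdist:
  fixes A T :: "'a::euclidean_space set"
  assumes "compact A" "A \<noteq> {}" "finite T" "T \<noteq> {}"
  obtains y where "y \<in> A" "A \<subseteq> (\<Union>t\<in>T. cball t (infdist y T))"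
proof -
  have "continuous_on A (\<lambda>y. infdist y T)"
    by (intro continuous_intros)
  then obtain y where y: "y \<in> A" and max: "\<And>z. z \<in> A \<Longrightarrow> infdist z T \<le> infdist y T"
    using continuous_attains_sup[OF assms(1,2)] by blast
  have "z \<in> (\<Union>t\<in>T. cball t (infdist y T))" if "z \<in> A" for z
  proof -
    obtain t where "t \<in> T" "infdist z T = dist z t"
      using infdist_attains_inf[OF finite_imp_closed[OF assms(3)] assms(4)] by blast
    then show ?thesis
      using max[OF that] by (auto simp: dist_commute)
  qed
  with y show ?thesis
    using that by blast
qed

lemma exists_annulus_point_far_from_finite_set:
  fixes T :: "'a::euclidean_space set"
  assumes "finite T" "T \<noteq> {}" "real (card T) \<le> N" "0 \<le> m" "m \<le> M"
  shows "\<exists>y. m \<le> norm y \<and> norm y \<le> M \<and>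
           (\<forall>t\<in>T. dist t y \<ge> ((M ^ DIM('a) - m ^ DIM('a)) / N) powr (1 / DIM('a)))"
proof -
  define D where "D = DIM('a)"
  define c where "c = unit_ball_vol D"
  define A :: "'a set" where "A = cball 0 M - ball 0 m"
  have "c > 0" "D > 0"
    unfolding c_def D_def by simp_all
  have "N > 0"
    using assms(1-3) by (metis card_gt_0_iff of_nat_0_less_iff order_less_le_trans)
  obtain z :: 'a where "norm z = M"
    using vector_choose_size assms(4,5) by (metis order_trans)
  then have "compact A" "A \<noteq> {}"
    using assms(5) unfolding A_def by (auto intro!: compact_diff)
  then obtain y where "y \<in> A" and cover: "A \<subseteq> (\<Union>t\<in>T. cball t (infdist y T))"
    using compact_covered_by_balls_of_max_infdist assms(1,2) by metis
  define r where "r = infdist y T"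
  have "r \<ge> 0"
    unfolding r_def by (rule infdist_nonneg)
  have "c * (M ^ D - m ^ D) = measure lborel A"
    unfolding A_def c_def D_def using assms(4,5) by (simp add: measure_annulus)
  also have "\<dots> \<le> real (card T) * (c * r ^ D)"
    unfolding c_def D_def r_def using assms(1) cover infdist_nonneg
    by (intro measure_le_card_mult_ball_vol) (auto simp: A_def)
  also have "\<dots> \<le> N * (c * r ^ D)"
    using assms(3) \<open>c > 0\<close> \<open>r \<ge> 0\<close> by (intro mult_right_mono) auto
  finally have "(M ^ D - m ^ D) / N \<le> r ^ D"
    using \<open>c > 0\<close> \<open>N > 0\<close> by (simp add: divide_le_eq mult.commute mult.left_commute)
  then have "((M ^ D - m ^ D) / N) powr (1 / D) \<le> (r ^ D) powr (1 / D)"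
    using assms(4,5) \<open>N > 0\<close> by (intro powr_mono2) (auto intro!: divide_nonneg_pos power_mono)
  also have "\<dots> = r"
    using \<open>r \<ge> 0\<close> \<open>D > 0\<close> by (simp add: powr_realpow'[symmetric] powr_powr)
  also have "r \<le> dist t y" if "t \<in> T" for t
    unfolding r_def using infdist_le[OF that, of y] by (simp add: dist_commute)
  finally show ?thesis
    using \<open>y \<in> A\<close> unfolding A_def D_def by (auto simp: not_less)
qed

lemma sentences_eq_image_PiE:
  "sentences V u = concat_sentence u ` (UNIV \<rightarrow>\<^sub>E {1..V})"
  unfolding sentences_def by (auto simp: PiE_def Pi_def extensional_def)

lemma finite_sentences: "finite (sentences V u)"
  unfolding sentences_eq_image_PiE by (simp add: finite_PiE)

lemma card_sentences_le:
  fixes u :: "nat \<Rightarrow> real^'k"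
  shows "card (sentences V u :: (real^('n::finite \<times> 'k)) set) \<le> V ^ CARD('n)"
proof -
  have "card (UNIV \<rightarrow>\<^sub>E {1..V} :: ('n \<Rightarrow> nat) set) = V ^ CARD('n)"
    by (simp add: card_PiE)
  moreover have "finite (UNIV \<rightarrow>\<^sub>E {1..V} :: ('n \<Rightarrow> nat) set)"
    by (simp add: finite_PiE)
  ultimately show ?thesis
    unfolding sentences_eq_image_PiE by (metis card_image_le)
qed

lemma sentences_nonempty: "V \<ge> 1 \<Longrightarrow> sentences V u \<noteq> {}"
  unfolding sentences_def by auto

theorem theorem5p9:
  fixes V :: nat
    and u :: "nat \<Rightarrow> real^'k"
    and f :: "real^('n::finite \<times> 'k) \<Rightarrow> real^'d"
  assumes "V \<ge> 1"
  defines "S \<equiv> (sentences V u :: (real^('n \<times> 'k)) set)"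
  defines "M \<equiv> Max ((\<lambda>x. norm (f x)) ` S)"
    and "m \<equiv> Min ((\<lambda>x. norm (f x)) ` S)"
  defines "\<epsilon> \<equiv> ((M ^ CARD('d) - m ^ CARD('d)) / real V ^ CARD('n)) powr (1 / real CARD('d))"
  shows "\<exists>y :: real^'d. m \<le> norm y \<and> norm y \<le> M \<and> (\<forall>x\<in>S. norm (f x - y) \<ge> \<epsilon>)"
proof -
  have "finite S" "S \<noteq> {}"
    unfolding S_def using finite_sentences sentences_nonempty[OF assms(1)] by blast+
  then have norms: "finite ((\<lambda>x. norm (f x)) ` S)" "(\<lambda>x. norm (f x)) ` S \<noteq> {}"
    by auto
  have "0 \<le> m" "m \<le> M"
    unfolding m_def M_def using norms by (auto simp: Min_ge_iff Min_le_iff)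
  have "real (card (f ` S)) \<le> real V ^ CARD('n)"
    using card_image_le[OF \<open>finite S\<close>, of f] card_sentences_le[of V u]
    unfolding S_def by (metis of_nat_le_iff of_nat_power order_trans)
  from exists_annulus_point_far_from_finite_set[OF _ _ this \<open>0 \<le> m\<close> \<open>m \<le> M\<close>]
  show ?thesis
    using \<open>finite S\<close> \<open>S \<noteq> {}\<close> unfolding \<epsilon>_def by (auto simp: dist_norm)
qed

end
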